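(* Over all 3-periodics of $\mathcal{E}$, the orthocenter $X_4^\dagger$ of the focus-inversive triangle moves on the circle with center and radius \[C_4^\dagger=\left(c\left(-1+\rho^2\frac{(b^2+\delta)\delta}{a^2b^4}\right),0\right),\qquad R_4^\dagger=\rho^2\,\frac{c^2(b^2+\delta)}{ab^4}.\]
   Context: Let $a>b>0$ and let $\mathcal{E}$ be the ellipse $x^2/a^2+y^2/b^2=1$. Set $c=\sqrt{a^2-b^2}$, $\delta=\sqrt{a^4-a^2b^2+b^4}$, and let the foci be $f_1=(-c,0)$, $f_2=(c,0)$. A 3-periodic is a triangle $P_1P_2P_3$ with vertices on $\mathcal{E}$ such that at each vertex the normal to $\mathcal{E}$ bisects the angle formed by the two sides meeting at that vertex; these form a one-parameter family (one through every point of $\mathcal{E}$). Fix $\rho>0$; the focus-inversive triangle has vertices $P_i^\dagger=f_1+(\rho/d_{1,i})^2(P_i-f_1)$, $d_{1,i}=|P_i-f_1|$. *)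

theory Defs
  imports "HOL-Analysis.Analysis"
begin

type_synonym pt = "real \<times> real"

definition on_ellipse :: "real \<Rightarrow> real \<Rightarrow> pt \<Rightarrow> bool" where
  "on_ellipse a b P \<longleftrightarrow> (fst P)\<^sup>2 / a\<^sup>2 + (snd P)\<^sup>2 / b\<^sup>2 = 1"

text \<open>Outward normal vector of the ellipse at P (gradient of the defining function, up to a factor 2).\<close>
definition ell_normal :: "real \<Rightarrow> real \<Rightarrow> pt \<Rightarrow> pt" where
  "ell_normal a b P = (fst P / a\<^sup>2, snd P / b\<^sup>2)"

definition vec_angle :: "pt \<Rightarrow> pt \<Rightarrow> real" where
  "vec_angle u v = arccos ((u \<bullet> v) / (norm u * norm v))"

definition normal_bisects :: "real \<Rightarrow> real \<Rightarrow> pt \<Rightarrow> pt \<Rightarrow> pt \<Rightarrow> bool" where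
  "normal_bisects a b P Q R \<longleftrightarrow>
     vec_angle (ell_normal a b P) (Q - P) = vec_angle (ell_normal a b P) (R - P)"

definition three_periodic :: "real \<Rightarrow> real \<Rightarrow> pt \<Rightarrow> pt \<Rightarrow> pt \<Rightarrow> bool" where
  "three_periodic a b P1 P2 P3 \<longleftrightarrow>
     on_ellipse a b P1 \<and> on_ellipse a b P2 \<and> on_ellipse a b P3 \<and>
     P1 \<noteq> P2 \<and> P2 \<noteq> P3 \<and> P1 \<noteq> P3 \<and>
     normal_bisects a b P1 P2 P3 \<and> normal_bisects a b P2 P3 P1 \<and> normal_bisects a b P3 P1 P2"

definition invert :: "pt \<Rightarrow> real \<Rightarrow> pt \<Rightarrow> pt" where
  "invert f \<rho> P = f + ((\<rho> / dist P f)\<^sup>2) *\<^sub>R (P - f)"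

definition is_orthocenter :: "pt \<Rightarrow> pt \<Rightarrow> pt \<Rightarrow> pt \<Rightarrow> bool" where
  "is_orthocenter A B C H \<longleftrightarrow>
     (H - A) \<bullet> (B - C) = 0 \<and> (H - B) \<bullet> (C - A) = 0 \<and> (H - C) \<bullet> (A - B) = 0"

end

theory Submission
  imports Defs
begin

(* Write each vertex in polar coordinates about the focus f1 = (-c, 0):
   P = f1 + lat/(1 - e Re z) (Re z, Im z) with z on the unit circle, e = c/a, lat = b^2/a.
   Inversion about f1 then gives P' = f1 + (rho^2/lat) g(z) with g(z) = z - (e/2) z^2 - e/2, a
   quadratic image of the unit circle.  By Joachimsthal's form of the reflection law the ratio
   of the polar form to the chord length is the same on all three sides; in the variables z
   this becomes one symmetric relation F(z_i, z_j) = 0 for every pair of vertices, and three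
   distinct common roots force z1 + z2 + z3 = q and z1 z2 + z1 z3 + z2 z3 = q z1 z2 z3 for a
   real q determined by e.  The altitudes of the triangle g(z_i) then all pass through
   K + R z1 z2 z3 with real K, R depending on e only, so the orthocenter of the inverted
   triangle runs on the circle with center f1 + (rho^2/lat)(K - e/2) and radius (rho^2/lat) R. *)

section \<open>A symmetric relation between points of the unit circle\<close>

definition pair_poly :: "complex \<Rightarrow> complex \<Rightarrow> complex \<Rightarrow> complex \<Rightarrow> complex \<Rightarrow> complex" where
  "pair_poly \<alpha> \<gamma> \<beta> x y = \<alpha>*(x+y)^2 - \<gamma>*(x+y)*(x*y+1) - 2*\<beta>*x*y"

lemma pair_poly_commute: "pair_poly \<alpha> \<gamma> \<beta> x y = pair_poly \<alpha> \<gamma> \<beta> y x"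
  unfolding pair_poly_def by (simp add: algebra_simps)

lemma pair_poly_two_roots:
  assumes y: "pair_poly \<alpha> \<gamma> \<beta> x y = 0" and w: "pair_poly \<alpha> \<gamma> \<beta> x w = 0" and "y \<noteq> w"
  shows "\<alpha>*x^3 - \<gamma>*x^2 + \<gamma>*(x*y*w)*x - \<alpha>*(x*y*w) = 0"
    and "(\<alpha> - \<gamma>*x)*(y+w) + 2*\<alpha>*x - \<gamma>*(x^2+1) - 2*\<beta>*x = 0"
proof -
  have "y - w \<noteq> 0" using \<open>y \<noteq> w\<close> by simp
  have "w * pair_poly \<alpha> \<gamma> \<beta> x y - y * pair_poly \<alpha> \<gamma> \<beta> x w
      = (y - w)*((\<alpha> - \<gamma>*x)*(y*w) - x*(\<alpha>*x - \<gamma>))"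
    unfolding pair_poly_def by algebra
  with y w \<open>y - w \<noteq> 0\<close> have prod: "(\<alpha> - \<gamma>*x)*(y*w) = x*(\<alpha>*x - \<gamma>)" by simp
  have "\<alpha>*x^3 - \<gamma>*x^2 + \<gamma>*(x*y*w)*x - \<alpha>*(x*y*w) = - x * ((\<alpha> - \<gamma>*x)*(y*w) - x*(\<alpha>*x - \<gamma>))"
    by algebra
  with prod show "\<alpha>*x^3 - \<gamma>*x^2 + \<gamma>*(x*y*w)*x - \<alpha>*(x*y*w) = 0" by simp
  have "pair_poly \<alpha> \<gamma> \<beta> x y - pair_poly \<alpha> \<gamma> \<beta> x w
      = (y - w)*((\<alpha> - \<gamma>*x)*(y+w) + 2*\<alpha>*x - \<gamma>*(x^2+1) - 2*\<beta>*x)"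
    unfolding pair_poly_def by algebra
  with y w \<open>y - w \<noteq> 0\<close> show "(\<alpha> - \<gamma>*x)*(y+w) + 2*\<alpha>*x - \<gamma>*(x^2+1) - 2*\<beta>*x = 0" by simp
qed

text \<open>Each root is a root of the cubic \<open>\<alpha> X\<^sup>3 - \<gamma> X\<^sup>2 + \<gamma> s X - \<alpha> s\<close>, \<open>s = z\<^sub>1 z\<^sub>2 z\<^sub>3\<close>,
  whose roots are exactly the three \<open>z\<^sub>i\<close>; Vieta's formulas follow.\<close>
lemma pair_poly_common_roots:
  fixes z1 z2 z3 \<alpha> \<gamma> \<beta> :: complex
  assumes F12: "pair_poly \<alpha> \<gamma> \<beta> z1 z2 = 0" and F13: "pair_poly \<alpha> \<gamma> \<beta> z1 z3 = 0"
    and F23: "pair_poly \<alpha> \<gamma> \<beta> z2 z3 = 0"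
    and d12: "z1 \<noteq> z2" and d13: "z1 \<noteq> z3" and d23: "z2 \<noteq> z3" and "z1 \<noteq> 0" and "\<alpha> \<noteq> 0"
  shows "\<alpha>*(z1+z2+z3) = \<gamma>" "\<alpha>*(z1*z2+z1*z3+z2*z3) = \<gamma>*(z1*z2*z3)" "\<alpha>^2 - \<gamma>^2 - 2*\<alpha>*\<beta> = 0"
proof -
  define s where "s = z1*z2*z3"
  have F21: "pair_poly \<alpha> \<gamma> \<beta> z2 z1 = 0" and F31: "pair_poly \<alpha> \<gamma> \<beta> z3 z1 = 0"
    and F32: "pair_poly \<alpha> \<gamma> \<beta> z3 z2 = 0"
    using F12 F13 F23 pair_poly_commute by metis+
  have p1: "\<alpha>*z1^3 - \<gamma>*z1^2 + \<gamma>* s*z1 - \<alpha>* s = 0"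
    using pair_poly_two_roots(1)[OF F12 F13 d23] unfolding s_def .
  have p2: "\<alpha>*z2^3 - \<gamma>*z2^2 + \<gamma>* s*z2 - \<alpha>* s = 0"
    using pair_poly_two_roots(1)[OF F21 F23 d13] unfolding s_def by (simp add: ac_simps)
  have p3: "\<alpha>*z3^3 - \<gamma>*z3^2 + \<gamma>* s*z3 - \<alpha>* s = 0"
    using pair_poly_two_roots(1)[OF F31 F32 d12] unfolding s_def by (simp add: ac_simps)
  have "\<alpha>*z1^3 - \<gamma>*z1^2 + \<gamma>* s*z1 - \<alpha>* s - (\<alpha>*z2^3 - \<gamma>*z2^2 + \<gamma>* s*z2 - \<alpha>* s)
      = (z1 - z2)*(\<alpha>*(z1^2+z1*z2+z2^2) - \<gamma>*(z1+z2) + \<gamma>* s)" by algebra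
  with p1 p2 d12 have q12: "\<alpha>*(z1^2+z1*z2+z2^2) - \<gamma>*(z1+z2) + \<gamma>* s = 0" by simp
  have "\<alpha>*z1^3 - \<gamma>*z1^2 + \<gamma>* s*z1 - \<alpha>* s - (\<alpha>*z3^3 - \<gamma>*z3^2 + \<gamma>* s*z3 - \<alpha>* s)
      = (z1 - z3)*(\<alpha>*(z1^2+z1*z3+z3^2) - \<gamma>*(z1+z3) + \<gamma>* s)" by algebra
  with p1 p3 d13 have q13: "\<alpha>*(z1^2+z1*z3+z3^2) - \<gamma>*(z1+z3) + \<gamma>* s = 0" by simp
  have "\<alpha>*(z1^2+z1*z2+z2^2) - \<gamma>*(z1+z2) + \<gamma>* s - (\<alpha>*(z1^2+z1*z3+z3^2) - \<gamma>*(z1+z3) + \<gamma>* s)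
      = (z2 - z3)*(\<alpha>*(z1+z2+z3) - \<gamma>)" by algebra
  with q12 q13 d23 show sum: "\<alpha>*(z1+z2+z3) = \<gamma>" by simp
  have "\<alpha>*(z1^2+z1*z2+z2^2) - \<gamma>*(z1+z2) + \<gamma>* s
      = -(\<alpha>*(z1*z2+z1*z3+z2*z3) - \<gamma>* s) + (z1+z2)*(\<alpha>*(z1+z2+z3) - \<gamma>)" by algebra
  with q12 sum show "\<alpha>*(z1*z2+z1*z3+z2*z3) = \<gamma>*(z1*z2*z3)" unfolding s_def by simp
  have "\<alpha>*((\<alpha> - \<gamma>*z1)*(z2+z3) + 2*\<alpha>*z1 - \<gamma>*(z1^2+1) - 2*\<beta>*z1)
      = (\<alpha> - \<gamma>*z1)*(\<alpha>*(z1+z2+z3) - \<gamma>) + z1*(\<alpha>^2 - \<gamma>^2 - 2*\<alpha>*\<beta>)" by algebra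
  with pair_poly_two_roots(2)[OF F12 F13 d23] sum have "z1*(\<alpha>^2 - \<gamma>^2 - 2*\<alpha>*\<beta>) = 0" by simp
  with \<open>z1 \<noteq> 0\<close> show "\<alpha>^2 - \<gamma>^2 - 2*\<alpha>*\<beta> = 0" by simp
qed

lemma pair_poly_unit_circle:
  fixes \<alpha> \<gamma> \<beta> :: real and z w :: complex
  assumes "cmod z = 1" "cmod w = 1"
  shows "pair_poly \<alpha> \<gamma> \<beta> z w
    = 2*z*w * of_real (\<alpha>*(1 + (Re z*Re w + Im z*Im w)) - \<gamma>*(Re z + Re w) - \<beta>)"
proof -
  obtain C1 S1 C2 S2 where z: "z = Complex C1 S1" and w: "w = Complex C2 S2"
    by (metis complex.exhaust_sel)
  have u1: "C1^2 + S1^2 = 1" and u2: "C2^2 + S2^2 = 1"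
    using assms unfolding z w cmod_def by simp_all
  have sq: "z^2 + w^2 = 2*z*w * of_real (Re z*Re w + Im z*Im w)"
    unfolding z w using u1 u2 by (simp add: complex_eq_iff power2_eq_square; algebra)
  have lin: "(z+w)*(z*w+1) = 2*z*w * of_real (Re z + Re w)"
    unfolding z w using u1 u2 by (simp add: complex_eq_iff power2_eq_square; algebra)
  have "pair_poly \<alpha> \<gamma> \<beta> z w = \<alpha>*(z^2+w^2) + 2*\<alpha>*z*w - \<gamma>*((z+w)*(z*w+1)) - 2*\<beta>*z*w"
    unfolding pair_poly_def by (simp add: algebra_simps power2_eq_square)
  then show ?thesis unfolding sq lin by (simp add: algebra_simps)
qed

lemma vieta_parameter:
  fixes e b \<kappa> q D :: real
  assumes e0: "0 < e" and e1: "e < 1" and b0: "0 < b" and k0: "0 < \<kappa>"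
    and hq: "q*(b^2+e^2*\<kappa>) = 2*e*\<kappa>"
    and rel: "(b^2+e^2*\<kappa>)^2 - 4*e^2*\<kappa>^2 - 4*(b^2+e^2*\<kappa>)*(b^2-\<kappa>) = 0"
    and D0: "0 \<le> D" and D2: "D^2 = 1 - e^2 + e^4"
  shows "3*e - 2*q - 2*e^2*q + e*q^2 = 0" "e*q = 1+e^2-D" "q^2 \<noteq> 1"
proof -
  define w where "w = b^2+e^2*\<kappa>"
  have "w > 0" unfolding w_def using b0 k0 by (simp add: add_pos_nonneg)
  have "w^2*(3*e - 2*q - 2*e^2*q + e*q^2) = 3*e*w^2 - 2*(1+e^2)*w*(q*w) + e*(q*w)^2"
    by algebra
  also have "\<dots> = -e*((b^2+e^2*\<kappa>)^2 - 4*e^2*\<kappa>^2 - 4*(b^2+e^2*\<kappa>)*(b^2-\<kappa>))"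
    using hq unfolding w_def by algebra
  finally show Q: "3*e - 2*q - 2*e^2*q + e*q^2 = 0" using rel \<open>w > 0\<close> by simp
  have "(e*q - (1+e^2))^2 = e*(3*e - 2*q - 2*e^2*q + e*q^2) + (1 - e^2 + e^4)" by algebra
  then have "(e*q - (1+e^2))^2 = D^2" using Q D2 by simp
  then have "e*q - (1+e^2) = D \<or> e*q - (1+e^2) = -D" by (metis power2_eq_iff)
  moreover have "e*q - (1+e^2) \<noteq> D"
  proof
    assume h: "e*q - (1+e^2) = D"
    have "D^2 - (1-e^2)^2 = e^2" using D2 by algebra
    then have "(1-e^2)^2 < D^2" using e0 by (smt (verit) zero_less_power)
    moreover have "0 \<le> 1 - e^2" using e0 e1 by (simp add: abs_square_le_1 less_imp_le)
    ultimately have "1 - e^2 < D" using D0 by (meson power_less_imp_less_base)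
    with h have "2 - e*q < 0" by simp
    moreover have "q > 0" using h D0 e0 by (smt (verit) zero_le_power2 zero_less_mult_iff)
    moreover have "q*b^2 = e*\<kappa>*(2 - e*q)" using hq by (simp add: algebra_simps power2_eq_square)
    ultimately show False using e0 k0 b0 by (smt (verit) mult_pos_neg mult_pos_pos zero_less_power)
  qed
  ultimately show "e*q = 1+e^2-D" by simp
  show "q^2 \<noteq> 1"
  proof
    assume "q^2 = 1"
    then have "(4*e)^2 = (2*q*(1+e^2))^2" using Q by (simp add: algebra_simps power2_eq_square)
    then have "(1-e^2)^2 = 0" using \<open>q^2 = 1\<close> by (simp add: power_mult_distrib; algebra)
    moreover have "e^2 < 1" using e0 e1 by (simp add: power_less_one_iff abs_less_iff)
    ultimately show False by simp
  qed
qed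

section \<open>Altitudes of a triangle with vertices \<open>z - (e/2) z\<^sup>2\<close>, \<open>|z| = 1\<close>\<close>

lemma vieta_cubic_relation:
  fixes z1 z2 z3 q :: complex
  assumes "z1+z2+z3 = q" "z1*z2+z1*z3+z2*z3 = q*(z1*z2*z3)"
  shows "(z1*z2*z3)*(1 - q*z1) = z1^2*(z1-q)"
proof -
  have "(z1*z2*z3)*(1 - q*z1) - z1^2*(z1-q)
      = z1*((z1*z2+z1*z3+z2*z3) - q*(z1*z2*z3)) + z1^2*(q - (z1+z2+z3))"
    by algebra
  with assms show ?thesis by simp
qed

text \<open>The constants \<open>K\<close>, \<open>R\<close> below are the coefficients of the orthocenter \<open>K + R z\<^sub>1z\<^sub>2z\<^sub>3\<close>;
  the four relations are the coefficients of the altitude condition after elimination of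
  \<open>z\<^sub>2, z\<^sub>3\<close>, each written as a combination of the three defining equations.\<close>
lemma orthocenter_coefficient_relations:
  fixes e q K R E :: real
  assumes Q: "3*e - 2*q - 2*e^2*q + e*q^2 = 0"
    and K: "(1-e^2)*K = e*(2-e*q)*(1+e^2-e*q) + (1-e^2)*e/2" and R: "(1-e^2)*R = e^2*(2-e*q)"
    and E: "E = e/2" and "e \<noteq> 0" and "1 - e^2 \<noteq> 0"
  shows "R - E*K - E*q - E*q*R + E^2*q^2 = 0"
    and "K - q + q*R - 2*E - E*R - 2*E*q*K + E*q^2 - E*q^2*R + 2*E^2*q = 0"
    and "- R - q*K + q^2 - q^2*R + E*K + 3*E*q + 2*E*q*R + 2*E*q^2*K - E*q^3 + E*q^3*R - 3*E^2*q^2 = 0"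
    and "- K + q - 2*q*R + 2*E + E*R + 3*E*q*K + 2*E*q^2*R - 2*E^2*q - E^2*q^3 = 0"
proof -
  define Kd where "Kd = (1-e^2)*K - (e*(2-e*q)*(1+e^2-e*q) + (1-e^2)*e/2)"
  define Rd where "Rd = (1-e^2)*R - e^2*(2-e*q)"
  define Qd where "Qd = 3*e - 2*q - 2*e^2*q + e*q^2"
  have "Kd = 0" "Rd = 0" "Qd = 0" using Q K R unfolding Kd_def Rd_def Qd_def by simp_all
  have "e*(1-e^2)*(R - E*K - E*q - E*q*R + E^2*q^2)
      = e*(-(1/2)*e)*Kd + e*(1 - (1/2)*e*q)*Rd + ((1/4)*e^2 - (1/4)*e^4)*Qd"
    unfolding Kd_def Rd_def Qd_def E by (simp add: field_simps; algebra)
  then show "R - E*K - E*q - E*q*R + E^2*q^2 = 0"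
    using \<open>Kd = 0\<close> \<open>Rd = 0\<close> \<open>Qd = 0\<close> assms(5,6) by simp
  have "e^2*(1-e^2)*(K - q + q*R - 2*E - E*R - 2*E*q*K + E*q^2 - E*q^2*R + 2*E^2*q)
      = e^2*(1 - e*q)*Kd + e^2*(q - (1/2)*e - (1/2)*e*q^2)*Rd
        + ((1/2)*e^2 + (1/2)*e^4 - (1/2)*e^5*q)*Qd"
    unfolding Kd_def Rd_def Qd_def E by (simp add: field_simps; algebra)
  then show "K - q + q*R - 2*E - E*R - 2*E*q*K + E*q^2 - E*q^2*R + 2*E^2*q = 0"
    using \<open>Kd = 0\<close> \<open>Rd = 0\<close> \<open>Qd = 0\<close> assms(5,6) by simp
  have "e^3*(1-e^2)*(- R - q*K + q^2 - q^2*R + E*K + 3*E*q + 2*E*q*R + 2*E*q^2*K - E*q^3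
          + E*q^3*R - 3*E^2*q^2)
      = e^3*(- q + (1/2)*e + e*q^2)*Kd + e^3*(- 1 - q^2 + e*q + (1/2)*e*q^3)*Rd
        + (- (1/2)*e^3*q - (1/4)*e^4 - (1/2)*e^5*q + (1/4)*e^6 + (1/2)*e^6*q^2)*Qd"
    unfolding Kd_def Rd_def Qd_def E by (simp add: field_simps; algebra)
  then show "- R - q*K + q^2 - q^2*R + E*K + 3*E*q + 2*E*q*R + 2*E*q^2*K - E*q^3 + E*q^3*R
      - 3*E^2*q^2 = 0"
    using \<open>Kd = 0\<close> \<open>Rd = 0\<close> \<open>Qd = 0\<close> assms(5,6) by simp
  have "e^2*(1-e^2)*(- K + q - 2*q*R + 2*E + E*R + 3*E*q*K + 2*E*q^2*R - 2*E^2*q - E^2*q^3)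
      = e^2*(- 1 + (3/2)*e*q)*Kd + e^2*(- 2*q + (1/2)*e + e*q^2)*Rd
        + (- (1/2)*e^2 - (1/4)*e^3*q - (1/2)*e^4 + (3/4)*e^5*q)*Qd"
    unfolding Kd_def Rd_def Qd_def E by (simp add: field_simps; algebra)
  then show "- K + q - 2*q*R + 2*E + E*R + 3*E*q*K + 2*E*q^2*R - 2*E^2*q - E^2*q^3 = 0"
    using \<open>Kd = 0\<close> \<open>Rd = 0\<close> \<open>Qd = 0\<close> assms(5,6) by simp
qed

lemma orthocenter_numerator_eq_0:
  fixes z s E q K R :: complex
  assumes c9: "R - E*K - E*q - E*q*R + E^2*q^2 = 0"
    and c6: "K - q + q*R - 2*E - E*R - 2*E*q*K + E*q^2 - E*q^2*R + 2*E^2*q = 0"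
    and c5: "- R - q*K + q^2 - q^2*R + E*K + 3*E*q + 2*E*q*R + 2*E*q^2*K - E*q^3 + E*q^3*R
               - 3*E^2*q^2 = 0"
    and c8: "- K + q - 2*q*R + 2*E + E*R + 3*E*q*K + 2*E*q^2*R - 2*E^2*q - E^2*q^3 = 0"
    and hs: "s*(1 - q*z) = z^2*(z-q)"
  shows "(1-q*z)^2 * (z^3*(K + R* s - z + E*z^2)*(s - E*q*z + E*z^2)
     - (K* s^2*z^2 + R* s*z^2 - s^2*z + E* s^2)*(1 - E*q + E*z)) = 0"
proof -
  define P0 where "P0 = -(z^4*E*q*K) + z^5*E*K + z^5*E*q - z^6*E - z^6*E^2*q + z^7*E^2"
  define P1 where "P1 = -(z^2*R) + z^2*E*q*R + z^3*K - z^3*E*R - z^4 - z^4*E*q*R + z^5*E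
    + z^5*E*R"
  define P2 where "P2 = -E + E^2*q + z - z*E*q - z*E^2 - z^2*K + z^2*E + z^2*E*q*K + z^3*R
    - z^3*E*K"
  have "(1-q*z)^2 * (z^3*(K + R* s - z + E*z^2)*(s - E*q*z + E*z^2)
     - (K* s^2*z^2 + R* s*z^2 - s^2*z + E* s^2)*(1 - E*q + E*z))
     = P2*(s*(1-q*z))^2 + P1*(1-q*z)*(s*(1-q*z)) + P0*(1-q*z)^2"
    unfolding P0_def P1_def P2_def by algebra
  also have "\<dots> = P2*(z^2*(z-q))^2 + P1*(1-q*z)*(z^2*(z-q)) + P0*(1-q*z)^2" by (simp add: hs)
  also have "\<dots> = z^4*q*(R - E*K - E*q - E*q*R + E^2*q^2)
     + z^5*(- R - q*K + q^2 - q^2*R + E*K + 3*E*q + 2*E*q*R + 2*E*q^2*K - E*q^3 + E*q^3*R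
            - 3*E^2*q^2)
     + z^6*(K - q + q*R - 2*E - E*R - 2*E*q*K + E*q^2 - E*q^2*R + 2*E^2*q)
     + z^7*q*(K - q + q*R - 2*E - E*R - 2*E*q*K + E*q^2 - E*q^2*R + 2*E^2*q)
     + z^8*(- K + q - 2*q*R + 2*E + E*R + 3*E*q*K + 2*E*q^2*R - 2*E^2*q - E^2*q^3)
     + z^9*(R - E*K - E*q - E*q*R + E^2*q^2)"
    unfolding P0_def P1_def P2_def by algebra
  also have "\<dots> = 0" using c5 c6 c8 c9 by simp
  finally show ?thesis .
qed

lemma orthocenter_conj_expansion:
  fixes z1 z2 z3 K R E :: complex
  assumes "z1 \<noteq> 0" "z2 \<noteq> 0" "z3 \<noteq> 0"
  defines "q \<equiv> z1+z2+z3" and "s \<equiv> z1*z2*z3"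
  shows "(K + R* s - (z1 - E*z1^2)) * (1/z2 - E/z2^2 - (1/z3 - E/z3^2))
       + (K + R/s - 1/z1 + E/z1^2) * ((z2 - E*z2^2) - (z3 - E*z3^2))
     = (z2 - z3) * ((K* s^2*z1^2 + R* s*z1^2 - s^2*z1 + E* s^2)*(1 - E*q + E*z1)
          - z1^3*(K + R* s - z1 + E*z1^2)*(s - E*q*z1 + E*z1^2)) / (z1^4*(z2*z3)^2)"
  unfolding q_def s_def using assms(1-3) by (simp add: field_simps; algebra)

lemma orthocenter_perp_of_numerator:
  fixes z1 z2 z3 :: complex and q K R E :: real
  defines "s \<equiv> z1*z2*z3"
  assumes u1: "cmod z1 = 1" and u2: "cmod z2 = 1" and u3: "cmod z3 = 1"
    and sum: "z1+z2+z3 = of_real q"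
    and num: "(of_real K * s^2*z1^2 + of_real R * s*z1^2 - s^2*z1 + of_real E * s^2)
        * (1 - of_real E * of_real q + of_real E * z1)
      - z1^3*(of_real K + of_real R * s - z1 + of_real E * z1^2)
        * (s - of_real E * of_real q * z1 + of_real E * z1^2) = 0"
  shows "Re ((of_real K + of_real R * s - (z1 - of_real E * z1^2))
           * cnj ((z2 - of_real E * z2^2) - (z3 - of_real E * z3^2))) = 0"
proof -
  let ?E = "complex_of_real E" and ?K = "complex_of_real K" and ?R = "complex_of_real R"
  define X where "X = ?K + ?R * s - (z1 - ?E*z1^2)"
  define Y where "Y = (z2 - ?E*z2^2) - (z3 - ?E*z3^2)"
  have nz: "z1 \<noteq> 0" "z2 \<noteq> 0" "z3 \<noteq> 0" using u1 u2 u3 by auto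
  have cnj_inv: "cnj z = 1 / z" if "cmod z = 1" for z
    using divide_conv_cnj[OF that, of 1] by simp
  have cX: "cnj X = ?K + ?R/s - 1/z1 + ?E/z1^2"
    unfolding X_def s_def using cnj_inv[OF u1] cnj_inv[OF u2] cnj_inv[OF u3]
    by (simp add: field_simps)
  have cY: "cnj Y = 1/z2 - ?E/z2^2 - (1/z3 - ?E/z3^2)"
    unfolding Y_def using cnj_inv[OF u2] cnj_inv[OF u3] by (simp add: field_simps)
  have "X * cnj Y + cnj X * Y
    = (z2 - z3) * ((?K* s^2*z1^2 + ?R* s*z1^2 - s^2*z1 + ?E* s^2)*(1 - ?E*(z1+z2+z3) + ?E*z1)
          - z1^3*(?K + ?R* s - z1 + ?E*z1^2)*(s - ?E*(z1+z2+z3)*z1 + ?E*z1^2)) / (z1^4*(z2*z3)^2)"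
    unfolding cX cY unfolding X_def Y_def s_def
    using orthocenter_conj_expansion[OF nz, of ?K ?R ?E] by simp
  also have "\<dots> = 0" using num unfolding sum by simp
  finally have "X * cnj Y + cnj (X * cnj Y) = 0" by simp
  then have "Re (X * cnj Y) = 0"
    by (metis complex_add_cnj mult_eq_0_iff of_real_eq_0_iff zero_neq_numeral)
  then show ?thesis unfolding X_def Y_def .
qed

text \<open>On the unit circle \<open>cnj z = 1/z\<close>, so the condition becomes a rational
  identity, whose numerator vanishes by the cubic relation of each \<open>z\<^sub>i\<close>.\<close>
lemma orthocenter_perp_unit_circle:
  fixes z1 z2 z3 :: complex and e q K R :: real
  assumes u: "cmod z1 = 1" "cmod z2 = 1" "cmod z3 = 1"
    and s1: "z1+z2+z3 = of_real q" and s2: "z1*z2+z1*z3+z2*z3 = of_real q*(z1*z2*z3)"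
    and "q^2 \<noteq> 1" and e0: "e \<noteq> 0" and e1: "1 - e^2 \<noteq> 0"
    and Q: "3*e - 2*q - 2*e^2*q + e*q^2 = 0"
    and K: "(1-e^2)*K = e*(2-e*q)*(1+e^2-e*q) + (1-e^2)*e/2" and R: "(1-e^2)*R = e^2*(2-e*q)"
  shows "Re ((of_real K + of_real R*(z1*z2*z3) - (z1 - of_real (e/2)*z1^2))
           * cnj ((z2 - of_real (e/2)*z2^2) - (z3 - of_real (e/2)*z3^2))) = 0"
proof -
  define E where "E = e/2"
  note cf = orthocenter_coefficient_relations[OF Q K R E_def e0 e1]
  let ?E = "complex_of_real E" and ?q = "complex_of_real q"
    and ?K = "complex_of_real K" and ?R = "complex_of_real R"
  have C9: "?R - ?E*?K - ?E*?q - ?E*?q*?R + ?E^2*?q^2 = 0"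
    using arg_cong[OF cf(1), of complex_of_real] by simp
  have C6: "?K - ?q + ?q*?R - 2*?E - ?E*?R - 2*?E*?q*?K + ?E*?q^2 - ?E*?q^2*?R + 2*?E^2*?q = 0"
    using arg_cong[OF cf(2), of complex_of_real] by simp
  have C5: "- ?R - ?q*?K + ?q^2 - ?q^2*?R + ?E*?K + 3*?E*?q + 2*?E*?q*?R + 2*?E*?q^2*?K
      - ?E*?q^3 + ?E*?q^3*?R - 3*?E^2*?q^2 = 0"
    using arg_cong[OF cf(3), of complex_of_real] by simp
  have C8: "- ?K + ?q - 2*?q*?R + 2*?E + ?E*?R + 3*?E*?q*?K + 2*?E*?q^2*?R - 2*?E^2*?q
      - ?E^2*?q^3 = 0"
    using arg_cong[OF cf(4), of complex_of_real] by simp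
  have "1 - ?q*z1 \<noteq> 0"
  proof
    assume "1 - ?q*z1 = 0"
    then have "cmod (?q*z1) = 1" by (metis eq_iff_diff_eq_0 norm_one)
    then have "\<bar>q\<bar> = 1" using u(1) by (simp add: norm_mult)
    with \<open>q^2 \<noteq> 1\<close> show False by (metis power2_abs one_power2)
  qed
  with orthocenter_numerator_eq_0[OF C9 C6 C5 C8 vieta_cubic_relation[OF s1 s2]]
  show ?thesis unfolding E_def[symmetric] by (intro orthocenter_perp_of_numerator[OF u s1]) simp
qed

section \<open>The polar form of an ellipse and the reflection law\<close>

definition ell_polar :: "real \<Rightarrow> real \<Rightarrow> pt \<Rightarrow> pt \<Rightarrow> real" where
  "ell_polar a b P Q = fst P * fst Q / a\<^sup>2 + snd P * snd Q / b\<^sup>2 - 1"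

lemma ell_polar_commute: "ell_polar a b P Q = ell_polar a b Q P"
  unfolding ell_polar_def by (simp add: mult.commute)

lemma ell_polar_on_ellipse:
  assumes "on_ellipse a b P" "on_ellipse a b Q"
  shows "ell_polar a b P Q = - ((fst P - fst Q)\<^sup>2 / a\<^sup>2 + (snd P - snd Q)\<^sup>2 / b\<^sup>2) / 2"
proof -
  have "(fst P - fst Q)\<^sup>2 / a\<^sup>2 + (snd P - snd Q)\<^sup>2 / b\<^sup>2
      = ((fst P)\<^sup>2 / a\<^sup>2 + (snd P)\<^sup>2 / b\<^sup>2) + ((fst Q)\<^sup>2 / a\<^sup>2 + (snd Q)\<^sup>2 / b\<^sup>2)
        - 2 * (fst P * fst Q / a\<^sup>2 + snd P * snd Q / b\<^sup>2)"
    by (simp add: power2_diff diff_divide_distrib add_divide_distrib algebra_simps)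
  then show ?thesis using assms unfolding ell_polar_def on_ellipse_def by (simp add: ac_simps)
qed

lemma ell_polar_neq_0:
  assumes "on_ellipse a b P" "on_ellipse a b Q" "P \<noteq> Q" "a \<noteq> 0" "b \<noteq> 0"
  shows "ell_polar a b P Q \<noteq> 0"
proof -
  have "fst P \<noteq> fst Q \<or> snd P \<noteq> snd Q" using \<open>P \<noteq> Q\<close> by (simp add: prod_eq_iff)
  then have "(fst P - fst Q)\<^sup>2 / a\<^sup>2 + (snd P - snd Q)\<^sup>2 / b\<^sup>2 > 0"
    using assms(4,5) by (auto intro: add_pos_nonneg add_nonneg_pos)
  then show ?thesis unfolding ell_polar_on_ellipse[OF assms(1,2)] by simp
qed

lemma ell_normal_inner:
  assumes "on_ellipse a b P" "a \<noteq> 0" "b \<noteq> 0"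
  shows "ell_normal a b P \<bullet> (Q - P) = ell_polar a b P Q"
proof -
  have "ell_normal a b P \<bullet> (Q - P)
      = fst P * fst Q / a\<^sup>2 + snd P * snd Q / b\<^sup>2 - ((fst P)\<^sup>2 / a\<^sup>2 + (snd P)\<^sup>2 / b\<^sup>2)"
    unfolding ell_normal_def using assms(2,3)
    by (simp add: inner_prod_def field_simps power2_eq_square)
  then show ?thesis using assms(1) unfolding ell_polar_def on_ellipse_def by simp
qed

lemma ell_normal_neq_0:
  assumes "on_ellipse a b P" "a \<noteq> 0" "b \<noteq> 0"
  shows "ell_normal a b P \<noteq> 0"
  using assms unfolding ell_normal_def on_ellipse_def by (auto simp: prod_eq_iff)

lemma normal_bisects_ratio:
  assumes "normal_bisects a b P Q R" "ell_normal a b P \<noteq> 0" "P \<noteq> Q" "P \<noteq> R"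
  shows "(ell_normal a b P \<bullet> (Q - P)) / dist P Q = (ell_normal a b P \<bullet> (R - P)) / dist P R"
proof -
  define n where "n = ell_normal a b P"
  have pos: "norm (Q - P) > 0" "norm (R - P) > 0" "norm n > 0"
    using assms(2-4) unfolding n_def by auto
  have bounded: "\<bar>(n \<bullet> v) / (norm n * norm v)\<bar> \<le> 1" if "norm v > 0" for v
    using that pos(3) Cauchy_Schwarz_ineq2[of n v] by (simp add: abs_div divide_le_eq_1 abs_mult)
  have "arccos ((n \<bullet> (Q - P)) / (norm n * norm (Q - P)))
      = arccos ((n \<bullet> (R - P)) / (norm n * norm (R - P)))"
    using assms(1) unfolding normal_bisects_def vec_angle_def n_def .
  then have "(n \<bullet> (Q - P)) / (norm n * norm (Q - P)) = (n \<bullet> (R - P)) / (norm n * norm (R - P))"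
    using arccos_eq_iff bounded pos by blast
  then have "norm n * ((n \<bullet> (Q - P)) / (norm n * norm (Q - P)))
      = norm n * ((n \<bullet> (R - P)) / (norm n * norm (R - P)))" by simp
  then show ?thesis using pos unfolding n_def by (simp add: dist_norm norm_minus_commute)
qed

text \<open>Joachimsthal's form of the reflection law: along a 3-periodic the ratio of the polar form
  to the chord length is the same for all three sides.\<close>
lemma three_periodic_joachimsthal:
  assumes "a \<noteq> 0" "b \<noteq> 0" "three_periodic a b P1 P2 P3"
  obtains \<kappa> where "0 < \<kappa>"
    "\<kappa> * (dist P1 P2)\<^sup>2 = a\<^sup>2 * b\<^sup>2 * (ell_polar a b P1 P2)\<^sup>2"
    "\<kappa> * (dist P1 P3)\<^sup>2 = a\<^sup>2 * b\<^sup>2 * (ell_polar a b P1 P3)\<^sup>2"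
    "\<kappa> * (dist P2 P3)\<^sup>2 = a\<^sup>2 * b\<^sup>2 * (ell_polar a b P2 P3)\<^sup>2"
proof -
  have on: "on_ellipse a b P1" "on_ellipse a b P2" "on_ellipse a b P3"
    and d: "P1 \<noteq> P2" "P2 \<noteq> P3" "P1 \<noteq> P3"
    and nb: "normal_bisects a b P1 P2 P3" "normal_bisects a b P2 P3 P1"
    using assms(3) unfolding three_periodic_def by auto
  have ratio: "ell_polar a b P Q / dist P Q = ell_polar a b P R / dist P R"
    if "on_ellipse a b P" "normal_bisects a b P Q R" "P \<noteq> Q" "P \<noteq> R" for P Q R
    using normal_bisects_ratio[OF that(2) ell_normal_neq_0[OF that(1) assms(1,2)] that(3,4)]
    unfolding ell_normal_inner[OF that(1) assms(1,2)] .
  define J where "J = ell_polar a b P1 P2 / dist P1 P2"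
  have J: "J = ell_polar a b P1 P2 / dist P1 P2" "J = ell_polar a b P1 P3 / dist P1 P3"
    "J = ell_polar a b P2 P3 / dist P2 P3"
    using ratio[OF on(1) nb(1) d(1) d(3)] ratio[OF on(2) nb(2) d(2) d(1)[symmetric]]
    unfolding J_def by (simp_all add: ell_polar_commute dist_commute)
  have chord: "a\<^sup>2 * b\<^sup>2 * J\<^sup>2 * (dist P Q)\<^sup>2 = a\<^sup>2 * b\<^sup>2 * (ell_polar a b P Q)\<^sup>2"
    if "J = ell_polar a b P Q / dist P Q" "P \<noteq> Q" for P Q
    using that by (simp add: power_divide)
  have "J \<noteq> 0" using ell_polar_neq_0[OF on(1,2) d(1) assms(1,2)] d(1) unfolding J_def by simp
  then have "0 < a\<^sup>2 * b\<^sup>2 * J\<^sup>2" using assms(1,2) by simp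
  then show ?thesis using that chord[OF J(1) d(1)] chord[OF J(2) d(3)] chord[OF J(3) d(2)] by blast
qed

definition pt_of_complex :: "complex \<Rightarrow> pt" where
  "pt_of_complex w = (Re w, Im w)"

lemma norm_pt_of_complex: "norm (pt_of_complex w) = cmod w"
  unfolding pt_of_complex_def norm_prod_def cmod_def by simp

lemma dist_sq_pt: "(dist (P::pt) Q)\<^sup>2 = (fst P - fst Q)\<^sup>2 + (snd P - snd Q)\<^sup>2"
  by (simp add: dist_norm norm_prod_def)

lemma inner_similar_image:
  fixes f :: pt and k :: real
  shows "((f + k *\<^sub>R pt_of_complex u) - (f + k *\<^sub>R pt_of_complex v))
         \<bullet> ((f + k *\<^sub>R pt_of_complex w) - (f + k *\<^sub>R pt_of_complex w'))
       = k\<^sup>2 * Re ((u - v) * cnj (w - w'))"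
  unfolding pt_of_complex_def by (simp add: inner_prod_def algebra_simps power2_eq_square)

lemma orthocenter_unique:
  fixes A B C H H' :: pt
  assumes "A \<noteq> B" "B \<noteq> C" "C \<noteq> A" "is_orthocenter A B C H"
    and "(H' - A) \<bullet> (B - C) = 0" "(H' - B) \<bullet> (C - A) = 0"
  shows "H' = H"
proof (rule ccontr)
  assume "H' \<noteq> H"
  define d where "d = H' - H"
  define perp where "perp = (- snd d, fst d)"
  have "d \<bullet> d > 0" using \<open>H' \<noteq> H\<close> unfolding d_def by simp
  have decomp: "(d \<bullet> d) *\<^sub>R x = (d \<bullet> x) *\<^sub>R d + (perp \<bullet> x) *\<^sub>R perp" for x :: pt
    unfolding perp_def by (simp add: inner_prod_def prod_eq_iff algebra_simps)
  have alt: "(H - A) \<bullet> (B - C) = 0" "(H - B) \<bullet> (C - A) = 0"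
    using assms(4) unfolding is_orthocenter_def by auto
  have side_perp: "(H - X) \<bullet> perp = 0"
    if "(H - X) \<bullet> u = 0" "d \<bullet> u = 0" "u \<noteq> 0" for X u
  proof -
    have u: "(d \<bullet> d) *\<^sub>R u = (perp \<bullet> u) *\<^sub>R perp" using decomp[of u] that(2) by simp
    then have "perp \<bullet> u \<noteq> 0" using that(3) \<open>d \<bullet> d > 0\<close> by auto
    have "(d \<bullet> d) * ((H - X) \<bullet> u) = (perp \<bullet> u) * ((H - X) \<bullet> perp)"
      using arg_cong[OF u, of "\<lambda>y. (H - X) \<bullet> y"] by (simp add: inner_commute)
    with that(1) \<open>perp \<bullet> u \<noteq> 0\<close> show ?thesis by simp
  qed
  have "d \<bullet> (B - C) = 0" "d \<bullet> (C - A) = 0"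
    using alt assms(5,6) unfolding d_def by (simp_all add: inner_diff_left)
  then have "(H - A) \<bullet> perp = 0" "(H - B) \<bullet> perp = 0"
    using side_perp alt assms(2,3) by auto
  then have "perp \<bullet> ((H - A) - (H - B)) = 0" by (simp add: inner_diff_right inner_commute)
  then have "perp \<bullet> (B - A) = 0" by simp
  moreover have "d \<bullet> (B - A) = 0"
    using \<open>d \<bullet> (B - C) = 0\<close> \<open>d \<bullet> (C - A) = 0\<close> by (simp add: inner_diff_right)
  ultimately have "(d \<bullet> d) *\<^sub>R (B - A) = 0" using decomp[of "B - A"] by simp
  with \<open>d \<bullet> d > 0\<close> assms(1) show False by simp
qed

lemma orthocenter_similar_image:
  fixes f :: pt and k :: real and u1 u2 u3 w :: complex
  defines "A \<equiv> \<lambda>z. f + k *\<^sub>R pt_of_complex z"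
  assumes "A u1 \<noteq> A u2" "A u2 \<noteq> A u3" "A u3 \<noteq> A u1" "is_orthocenter (A u1) (A u2) (A u3) H"
    and "Re ((w - u1) * cnj (u2 - u3)) = 0" "Re ((w - u2) * cnj (u3 - u1)) = 0"
  shows "H = A w"
proof -
  have "(A w - A u1) \<bullet> (A u2 - A u3) = 0" "(A w - A u2) \<bullet> (A u3 - A u1) = 0"
    unfolding A_def inner_similar_image using assms(6,7) by simp_all
  from orthocenter_unique[OF assms(2-5) this] show ?thesis by simp
qed

lemma invert_inj:
  assumes "P \<noteq> f" "Q \<noteq> f" "\<rho> > 0" "invert f \<rho> P = invert f \<rho> Q"
  shows "P = Q"
proof -
  define v w where "v = P - f" and "w = Q - f"
  have pos: "norm v > 0" "norm w > 0" using assms(1,2) unfolding v_def w_def by auto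
  have eq: "(\<rho>/norm v)\<^sup>2 *\<^sub>R v = (\<rho>/norm w)\<^sup>2 *\<^sub>R w"
    using assms(4) unfolding invert_def v_def w_def by (simp add: dist_norm)
  then have "norm ((\<rho>/norm v)\<^sup>2 *\<^sub>R v) = norm ((\<rho>/norm w)\<^sup>2 *\<^sub>R w)" by simp
  then have "\<rho>\<^sup>2 / norm v = \<rho>\<^sup>2 / norm w" using pos by (simp add: power2_eq_square field_simps)
  then have "norm v = norm w" using assms(3) pos by (simp add: field_simps)
  then have "v = w" using eq pos assms(3) by simp
  then show ?thesis unfolding v_def w_def by simp
qed

section \<open>Focal polar coordinates on an ellipse\<close>

lemma focal_chord_identities:
  fixes a b c x1 y1 x2 y2 C1 S1 C2 S2 :: real
  assumes a0: "a > 0" and b0: "b > 0" and cc: "c^2 = a^2 - b^2"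
    and hx1: "x1*(1-(c/a)*C1) = a*C1 - c" and hy1: "y1*(1-(c/a)*C1) = (b^2/a)*S1"
    and hx2: "x2*(1-(c/a)*C2) = a*C2 - c" and hy2: "y2*(1-(c/a)*C2) = (b^2/a)*S2"
  shows "(x1*x2/a^2 + y1*y2/b^2 - 1)*((1-(c/a)*C1)*(1-(c/a)*C2)) = -(b^2/a^2)*(1-(C1*C2+S1*S2))"
    and "((x2-x1)^2+(y2-y1)^2)*((1-(c/a)*C1)*(1-(c/a)*C2))^2
         = (b^2/a)^2*((C2-C1)^2 + (S2-S1-(c/a)*(S2*C1-S1*C2))^2)"
proof -
  define u1 u2 where "u1 = 1-(c/a)*C1" and "u2 = 1-(c/a)*C2"
  have X: "x1*x2*(u1*u2) = (a*C1-c)*(a*C2-c)"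
    using hx1 hx2 unfolding u1_def u2_def by (metis mult.assoc mult.left_commute)
  have Y: "y1*y2*(u1*u2) = (b^2/a)^2*(S1*S2)"
  proof -
    have "y1*y2*(u1*u2) = (y1*u1)*(y2*u2)" by (simp add: ac_simps)
    also have "\<dots> = ((b^2/a)*S1)*((b^2/a)*S2)" unfolding u1_def u2_def by (simp only: hy1 hy2)
    finally show ?thesis by (simp add: power2_eq_square)
  qed
  have "(x1*x2/a^2 + y1*y2/b^2 - 1)*(u1*u2) = (x1*x2*(u1*u2))/a^2 + (y1*y2*(u1*u2))/b^2 - u1*u2"
    by (simp add: field_simps)
  also have "\<dots> = (a*C1-c)*(a*C2-c)/a^2 + (b^2/a)^2*(S1*S2)/b^2 - u1*u2" using X Y by simp
  also have "\<dots> = -(b^2/a^2)*(1-(C1*C2+S1*S2))"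
    unfolding u1_def u2_def using a0 b0 cc by (simp add: field_simps power2_eq_square; algebra)
  finally show "(x1*x2/a^2 + y1*y2/b^2 - 1)*((1-(c/a)*C1)*(1-(c/a)*C2))
      = -(b^2/a^2)*(1-(C1*C2+S1*S2))"
    unfolding u1_def u2_def .
  have DX: "(x2-x1)*(u1*u2) = (b^2/a)*(C2-C1)"
  proof -
    have "(x2-x1)*(u1*u2) = (x2*u2)*u1 - (x1*u1)*u2" by (simp add: algebra_simps)
    also have "\<dots> = (a*C2-c)*u1 - (a*C1-c)*u2" using hx1 hx2 unfolding u1_def u2_def by simp
    also have "\<dots> = (b^2/a)*(C2-C1)" unfolding u1_def u2_def using a0 cc
      by (simp add: field_simps power2_eq_square; algebra)
    finally show ?thesis .
  qed
  have DY: "(y2-y1)*(u1*u2) = (b^2/a)*(S2-S1-(c/a)*(S2*C1-S1*C2))"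
  proof -
    have "(y2-y1)*(u1*u2) = (y2*u2)*u1 - (y1*u1)*u2" by (simp add: algebra_simps)
    also have "\<dots> = (b^2/a)*S2*u1 - (b^2/a)*S1*u2" using hy1 hy2 unfolding u1_def u2_def by simp
    also have "\<dots> = (b^2/a)*(S2-S1-(c/a)*(S2*C1-S1*C2))" unfolding u1_def u2_def by algebra
    finally show ?thesis .
  qed
  have "((x2-x1)^2+(y2-y1)^2)*(u1*u2)^2 = ((x2-x1)*(u1*u2))^2 + ((y2-y1)*(u1*u2))^2"
    by (simp add: algebra_simps power2_eq_square)
  also have "\<dots> = (b^2/a)^2*((C2-C1)^2 + (S2-S1-(c/a)*(S2*C1-S1*C2))^2)"
    unfolding DX DY by algebra
  finally show "((x2-x1)^2+(y2-y1)^2)*((1-(c/a)*C1)*(1-(c/a)*C2))^2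
      = (b^2/a)^2*((C2-C1)^2 + (S2-S1-(c/a)*(S2*C1-S1*C2))^2)"
    unfolding u1_def u2_def .
qed

lemma focal_chord_length_factor:
  fixes e C1 S1 C2 S2 :: real
  assumes "C1^2+S1^2 = 1" "C2^2+S2^2 = 1"
  shows "(C2-C1)^2 + (S2-S1-e*(S2*C1-S1*C2))^2
       = 2*(1-(C1*C2+S1*S2))*(1 + (e^2/2)*(1+(C1*C2+S1*S2)) - e*(C1+C2))"
  using assms by (simp add: field_simps; algebra)

locale ellipse =
  fixes a b :: real
  assumes b_pos: "0 < b" and b_less_a: "b < a"
begin

definition c :: real where "c = sqrt (a\<^sup>2 - b\<^sup>2)"
definition ecc :: real where "ecc = c / a"
definition lat :: real where "lat = b\<^sup>2 / a"
definition \<delta> :: real where "\<delta> = sqrt (a^4 - a\<^sup>2 * b\<^sup>2 + b^4)"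

lemma a_pos: "0 < a"
  using b_pos b_less_a by simp

lemma c_sq: "c\<^sup>2 = a\<^sup>2 - b\<^sup>2"
proof -
  have "b\<^sup>2 < a\<^sup>2" using b_pos b_less_a by (simp add: power_strict_mono)
  then show ?thesis unfolding c_def by simp
qed

lemma c_pos: "0 < c"
  using c_sq b_pos b_less_a unfolding c_def by (simp add: power_strict_mono)

lemma c_less_a: "c < a"
  using c_sq c_pos a_pos b_pos by (smt (verit) power_mono zero_less_power)

lemma ecc_pos: "0 < ecc" and ecc_less_1: "ecc < 1"
  unfolding ecc_def using a_pos c_pos c_less_a by simp_all

lemma one_minus_ecc_sq: "1 - ecc\<^sup>2 = b\<^sup>2 / a\<^sup>2"
  unfolding ecc_def using c_sq a_pos by (simp add: field_simps)

lemma lat_pos: "0 < lat"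
  unfolding lat_def using a_pos b_pos by simp

lemma delta_sq: "\<delta>\<^sup>2 = a^4 - a\<^sup>2 * b\<^sup>2 + b^4" and delta_nonneg: "0 \<le> \<delta>"
proof -
  have "a^4 - a\<^sup>2 * b\<^sup>2 + b^4 = (a\<^sup>2 - b\<^sup>2)\<^sup>2 + a\<^sup>2 * b\<^sup>2" by algebra
  also have "\<dots> \<ge> 0" by simp
  finally show "\<delta>\<^sup>2 = a^4 - a\<^sup>2 * b\<^sup>2 + b^4" "0 \<le> \<delta>" unfolding \<delta>_def by simp_all
qed

lemma delta_normalized_sq: "(\<delta> / a\<^sup>2)\<^sup>2 = 1 - ecc\<^sup>2 + ecc^4"
  using delta_sq c_sq a_pos unfolding ecc_def
  by (simp add: field_simps power2_eq_square power4_eq_xxxx; algebra)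

definition focal_polar :: "pt \<Rightarrow> complex \<Rightarrow> bool" where
  "focal_polar P z \<longleftrightarrow> cmod z = 1 \<and> 0 < 1 - ecc * Re z \<and>
     P = (- c, 0) + (lat / (1 - ecc * Re z)) *\<^sub>R pt_of_complex z"

lemma focal_polar_coords:
  assumes "focal_polar P z"
  shows "fst P * (1 - ecc * Re z) = a * Re z - c"
    and "snd P * (1 - ecc * Re z) = lat * Im z"
    and "dist P (- c, 0) = lat / (1 - ecc * Re z)"
proof -
  have u: "0 < 1 - ecc * Re z" and P: "P = (- c, 0) + (lat / (1 - ecc * Re z)) *\<^sub>R pt_of_complex z"
    and z: "cmod z = 1"
    using assms unfolding focal_polar_def by auto
  have "c * ecc + lat = a"
    unfolding ecc_def lat_def using c_sq a_pos by (simp add: field_simps power2_eq_square)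
  have "fst P * (1 - ecc * Re z) = - c * (1 - ecc * Re z) + lat * Re z"
    using u unfolding P pt_of_complex_def by (simp add: field_simps)
  also have "\<dots> = (c * ecc + lat) * Re z - c" by (simp add: algebra_simps)
  finally show "fst P * (1 - ecc * Re z) = a * Re z - c"
    unfolding \<open>c * ecc + lat = a\<close> .
  show "snd P * (1 - ecc * Re z) = lat * Im z"
    using u unfolding P pt_of_complex_def by simp
  show "dist P (- c, 0) = lat / (1 - ecc * Re z)"
    using u lat_pos z unfolding P dist_norm by (simp add: norm_pt_of_complex)
qed

lemma focal_polar_unique: "focal_polar P z \<Longrightarrow> focal_polar Q z \<Longrightarrow> P = Q"
  unfolding focal_polar_def by simp

lemma focal_polar_ne_focus: "focal_polar P z \<Longrightarrow> P \<noteq> (- c, 0)"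
  using focal_polar_coords(3) lat_pos unfolding focal_polar_def by fastforce

lemma on_ellipse_focal_polar:
  assumes "on_ellipse a b P"
  obtains z where "focal_polar P z"
proof -
  obtain x y where P: "P = (x, y)" by (cases P)
  have ell: "x\<^sup>2 * b\<^sup>2 + y\<^sup>2 * a\<^sup>2 = a\<^sup>2 * b\<^sup>2"
    using assms a_pos b_pos unfolding on_ellipse_def P by (simp add: field_simps)
  then have "x\<^sup>2 * b\<^sup>2 \<le> a\<^sup>2 * b\<^sup>2" by (smt (verit) mult_nonneg_nonneg zero_le_power2)
  then have "x\<^sup>2 \<le> a\<^sup>2" using b_pos by simp
  then have "\<bar>x\<bar> \<le> a" using a_pos by (metis abs_le_square_iff abs_of_pos)
  define d where "d = a + ecc * x"
  have "ecc * \<bar>x\<bar> \<le> ecc * a" using \<open>\<bar>x\<bar> \<le> a\<close> ecc_pos by (simp add: mult_left_mono)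
  moreover have "ecc * a < a" using ecc_less_1 a_pos by simp
  ultimately have "ecc * \<bar>x\<bar> < a" by (rule le_less_trans)
  then have "\<bar>ecc * x\<bar> < a" using ecc_pos by (simp add: abs_mult)
  then have "0 < d" unfolding d_def by linarith
  have "a\<^sup>2 * ((x + c)\<^sup>2 + y\<^sup>2) = a\<^sup>2 * d\<^sup>2"
    unfolding d_def ecc_def using a_pos ell c_sq by (simp add: field_simps power2_eq_square; algebra)
  then have d_sq: "(x + c)\<^sup>2 + y\<^sup>2 = d\<^sup>2" using a_pos by simp
  define z where "z = Complex ((x + c) / d) (y / d)"
  have "((x + c) / d)\<^sup>2 + (y / d)\<^sup>2 = 1"
    using d_sq \<open>0 < d\<close> by (simp add: power_divide field_simps)
  then have "cmod z = 1" unfolding z_def cmod_def by simp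
  have "a - ecc * c = lat"
    unfolding ecc_def lat_def using c_sq a_pos by (simp add: field_simps power2_eq_square)
  then have "d - ecc * (x + c) = lat" unfolding d_def by (simp add: algebra_simps)
  then have u: "1 - ecc * Re z = lat / d" unfolding z_def using \<open>0 < d\<close> by (simp add: field_simps)
  have "(lat / (1 - ecc * Re z)) *\<^sub>R pt_of_complex z = (x + c, y)"
    unfolding u unfolding z_def pt_of_complex_def using lat_pos \<open>0 < d\<close> by simp
  then have "focal_polar P z"
    unfolding focal_polar_def using \<open>cmod z = 1\<close> u lat_pos \<open>0 < d\<close> by (simp add: P)
  then show ?thesis by (rule that)
qed

section \<open>The inverted 3-periodic and its orthocenter\<close>

lemma invert_focal_polar:
  assumes "focal_polar P z"
  shows "invert (- c, 0) \<rho> P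
    = (- c, 0) + (\<rho>\<^sup>2 / lat) *\<^sub>R pt_of_complex (z - of_real (ecc/2) * z\<^sup>2 - of_real (ecc/2))"
proof -
  define u where "u = 1 - ecc * Re z"
  have z: "cmod z = 1" and "0 < u" and P: "P - (- c, 0) = (lat / u) *\<^sub>R pt_of_complex z"
    using assms unfolding focal_polar_def u_def by auto
  have "dist P (- c, 0) = lat / u" using focal_polar_coords(3)[OF assms] unfolding u_def .
  then have "invert (- c, 0) \<rho> P = (- c, 0) + ((\<rho>\<^sup>2 / lat) * u) *\<^sub>R pt_of_complex z"
    unfolding invert_def P using \<open>0 < u\<close> lat_pos by (simp add: power2_eq_square)
  moreover have "u *\<^sub>R pt_of_complex z = pt_of_complex (z - of_real (ecc/2) * z\<^sup>2 - of_real (ecc/2))"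
  proof -
    have "(Re z)\<^sup>2 + (Im z)\<^sup>2 = 1" using z unfolding cmod_def by simp
    then show ?thesis unfolding u_def pt_of_complex_def
      by (simp add: power2_eq_square algebra_simps; algebra)
  qed
  ultimately show ?thesis by (metis scaleR_scaleR)
qed

lemma focal_pair_relation:
  assumes P: "focal_polar P z" and Q: "focal_polar Q w" and "z \<noteq> w"
    and chord: "\<kappa> * (dist P Q)\<^sup>2 = a\<^sup>2 * b\<^sup>2 * (ell_polar a b P Q)\<^sup>2"
  shows "pair_poly (of_real ((b\<^sup>2 + ecc\<^sup>2 * \<kappa>) / 2)) (of_real (ecc * \<kappa>)) (of_real (b\<^sup>2 - \<kappa>)) z w = 0"
proof -
  define C1 S1 C2 S2 where "C1 = Re z" and "S1 = Im z" and "C2 = Re w" and "S2 = Im w"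
  have un1: "C1^2 + S1^2 = 1" and un2: "C2^2 + S2^2 = 1"
    using P Q unfolding focal_polar_def C1_def S1_def C2_def S2_def cmod_def by simp_all
  define R where "R = C1*C2 + S1*S2"
  define U where "U = (1 - ecc*C1)*(1 - ecc*C2)"
  define N where "N = ell_polar a b P Q"
  define L where "L = (fst Q - fst P)^2 + (snd Q - snd P)^2"
  note coords = focal_polar_coords[OF P] focal_polar_coords[OF Q]
  note ch = focal_chord_identities[OF a_pos b_pos c_sq coords(1,2,4,5)
      [unfolded ecc_def lat_def, folded C1_def S1_def C2_def S2_def]]
  have hN: "N*U = -(b^2/a^2)*(1-R)"
    using ch(1) unfolding N_def U_def R_def ell_polar_def ecc_def .
  define M where "M = 1 + (ecc^2/2)*(1+R) - ecc*(C1+C2)"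
  have hL: "L*U^2 = (b^2/a)^2*(2*(1-R)*M)"
    using ch(2) unfolding L_def U_def R_def M_def ecc_def focal_chord_length_factor[OF un1 un2] .
  have "0 < (C1-C2)^2 + (S1-S2)^2"
    using \<open>z \<noteq> w\<close> unfolding C1_def S1_def C2_def S2_def by (simp add: sum_power2_gt_zero_iff complex_eq_iff)
  moreover have "1 - R = ((C1-C2)^2 + (S1-S2)^2)/2"
    unfolding R_def using un1 un2 by (simp add: field_simps; algebra)
  ultimately have "0 < 1 - R" by simp
  have "\<kappa> * (L * U^2) = a^2 * b^2 * (N*U)^2"
    using chord unfolding L_def N_def dist_sq_pt by (simp add: power_mult_distrib power2_commute)
  then have "\<kappa> * ((b^2/a)^2 * (2*(1-R)*M)) = a^2 * b^2 * ((b^2/a^2)*(1-R))^2"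
    unfolding hL hN by simp
  also have "\<dots> = (b^2/a)^2 * (b^2*(1-R)^2)"
    using a_pos by (simp add: field_simps power2_eq_square)
  finally have "(b^2/a)^2 * (\<kappa>*(2*(1-R)*M)) = (b^2/a)^2 * (b^2*(1-R)^2)" by (simp add: ac_simps)
  then have "\<kappa>*(2*(1-R)*M) = b^2*(1-R)^2" using a_pos b_pos by simp
  then have "(1-R) * (2*(\<kappa>*M)) = (1-R) * (b^2*(1-R))" by (simp add: algebra_simps power2_eq_square)
  then have "2*(\<kappa>*M) = b^2*(1-R)" using \<open>0 < 1 - R\<close> by simp
  then have "((b^2 + ecc^2*\<kappa>)/2)*(1 + R) - (ecc*\<kappa>)*(C1+C2) - (b^2 - \<kappa>) = 0"
    unfolding M_def by (simp add: field_simps)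
  then show ?thesis
    unfolding pair_poly_unit_circle[OF conjunct1[OF P[unfolded focal_polar_def]]
        conjunct1[OF Q[unfolded focal_polar_def]]]
    unfolding R_def C1_def S1_def C2_def S2_def by simp
qed

lemma three_periodic_focal_vieta:
  assumes "three_periodic a b P1 P2 P3"
    and z1: "focal_polar P1 z1" and z2: "focal_polar P2 z2" and z3: "focal_polar P3 z3"
  obtains q where "z1 + z2 + z3 = of_real q" "z1*z2 + z1*z3 + z2*z3 = of_real q * (z1*z2*z3)"
    "3*ecc - 2*q - 2*ecc\<^sup>2*q + ecc*q\<^sup>2 = 0" "ecc * q = 1 + ecc\<^sup>2 - \<delta> / a\<^sup>2" "q\<^sup>2 \<noteq> 1"
proof -
  have "a \<noteq> 0" "b \<noteq> 0" using a_pos b_pos by simp_all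
  then obtain \<kappa> where "0 < \<kappa>"
    and chords: "\<kappa> * (dist P1 P2)\<^sup>2 = a\<^sup>2 * b\<^sup>2 * (ell_polar a b P1 P2)\<^sup>2"
      "\<kappa> * (dist P1 P3)\<^sup>2 = a\<^sup>2 * b\<^sup>2 * (ell_polar a b P1 P3)\<^sup>2"
      "\<kappa> * (dist P2 P3)\<^sup>2 = a\<^sup>2 * b\<^sup>2 * (ell_polar a b P2 P3)\<^sup>2"
    by (rule three_periodic_joachimsthal[OF _ _ assms(1)])
  have "P1 \<noteq> P2" "P1 \<noteq> P3" "P2 \<noteq> P3" using assms(1) unfolding three_periodic_def by auto
  then have d: "z1 \<noteq> z2" "z1 \<noteq> z3" "z2 \<noteq> z3"
    using focal_polar_unique[OF z1, of P2] focal_polar_unique[OF z1, of P3]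
      focal_polar_unique[OF z2, of P3] z2 z3 by auto
  define \<alpha> \<gamma> \<beta> where "\<alpha> = (b\<^sup>2 + ecc\<^sup>2 * \<kappa>) / 2" and "\<gamma> = ecc * \<kappa>" and "\<beta> = b\<^sup>2 - \<kappa>"
  have "0 < \<alpha>" unfolding \<alpha>_def using b_pos \<open>0 < \<kappa>\<close> by (simp add: add_pos_nonneg)
  have "z1 \<noteq> 0" using z1 unfolding focal_polar_def by auto
  have "complex_of_real \<alpha> \<noteq> 0" using \<open>0 < \<alpha>\<close> by simp
  note vieta = pair_poly_common_roots[OF focal_pair_relation[OF z1 z2 d(1) chords(1)]
      focal_pair_relation[OF z1 z3 d(2) chords(2)] focal_pair_relation[OF z2 z3 d(3) chords(3)]
      d \<open>z1 \<noteq> 0\<close> this[unfolded \<alpha>_def], folded \<alpha>_def \<gamma>_def \<beta>_def]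
  define q where "q = \<gamma> / \<alpha>"
  have "of_real \<alpha> * (z1 + z2 + z3) = of_real \<alpha> * of_real q"
    using vieta(1) \<open>0 < \<alpha>\<close> unfolding q_def by simp
  then have sum: "z1 + z2 + z3 = of_real q" using \<open>0 < \<alpha>\<close> by simp
  have "of_real \<alpha> * (z1*z2 + z1*z3 + z2*z3) = of_real \<alpha> * (of_real q * (z1*z2*z3))"
    using vieta(2) \<open>0 < \<alpha>\<close> unfolding q_def by simp
  then have sum2: "z1*z2 + z1*z3 + z2*z3 = of_real q * (z1*z2*z3)" using \<open>0 < \<alpha>\<close> by simp
  have "complex_of_real (\<alpha>\<^sup>2 - \<gamma>\<^sup>2 - 2*\<alpha>*\<beta>) = 0" using vieta(3) by simp
  then have "\<alpha>\<^sup>2 - \<gamma>\<^sup>2 - 2*\<alpha>*\<beta> = 0" by (simp only: of_real_eq_0_iff)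
  then have rel: "(b\<^sup>2 + ecc\<^sup>2*\<kappa>)\<^sup>2 - 4*ecc\<^sup>2*\<kappa>\<^sup>2 - 4*(b\<^sup>2 + ecc\<^sup>2*\<kappa>)*(b\<^sup>2 - \<kappa>) = 0"
    unfolding \<alpha>_def \<gamma>_def \<beta>_def by (simp add: field_simps power2_eq_square)
  have "q * (b\<^sup>2 + ecc\<^sup>2*\<kappa>) = 2*ecc*\<kappa>"
    using \<open>0 < \<alpha>\<close> unfolding q_def \<alpha>_def \<gamma>_def by (simp add: field_simps)
  moreover have "0 \<le> \<delta> / a\<^sup>2" using delta_nonneg by simp
  ultimately show ?thesis
    using that[OF sum sum2] vieta_parameter[OF ecc_pos ecc_less_1 b_pos \<open>0 < \<kappa>\<close> _ rel _ delta_normalized_sq]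
    by blast
qed

definition ortho_center_coeff :: real where
  "ortho_center_coeff = ecc * (1 - ecc\<^sup>2 + \<delta>/a\<^sup>2) * (\<delta>/a\<^sup>2) / (1 - ecc\<^sup>2)"

definition ortho_radius_coeff :: real where
  "ortho_radius_coeff = ecc\<^sup>2 * (1 - ecc\<^sup>2 + \<delta>/a\<^sup>2) / (1 - ecc\<^sup>2)"

lemma inverse_orthocenter_eq:
  assumes "0 < \<rho>" and tp: "three_periodic a b P1 P2 P3"
    and z1: "focal_polar P1 z1" and z2: "focal_polar P2 z2" and z3: "focal_polar P3 z3"
    and H: "is_orthocenter (invert (- c, 0) \<rho> P1) (invert (- c, 0) \<rho> P2) (invert (- c, 0) \<rho> P3) H"
  shows "H = (- c, 0) + (\<rho>\<^sup>2 / lat) *\<^sub>R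
     pt_of_complex (of_real ortho_center_coeff + of_real ortho_radius_coeff * (z1*z2*z3))"
proof -
  obtain q where sum: "z1 + z2 + z3 = of_real q" and sum2: "z1*z2 + z1*z3 + z2*z3 = of_real q * (z1*z2*z3)"
    and Q: "3*ecc - 2*q - 2*ecc\<^sup>2*q + ecc*q\<^sup>2 = 0" and eq: "ecc * q = 1 + ecc\<^sup>2 - \<delta> / a\<^sup>2"
    and "q\<^sup>2 \<noteq> 1"
    by (rule three_periodic_focal_vieta[OF tp z1 z2 z3])
  have u: "cmod z1 = 1" "cmod z2 = 1" "cmod z3 = 1"
    using z1 z2 z3 unfolding focal_polar_def by auto
  have "1 - ecc\<^sup>2 \<noteq> 0" "ecc \<noteq> 0" using one_minus_ecc_sq a_pos b_pos ecc_pos by simp_all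
  define D where "D = \<delta> / a\<^sup>2"
  have eqD: "2 - ecc*q = 1 - ecc\<^sup>2 + D" "1 + ecc\<^sup>2 - ecc*q = D" using eq unfolding D_def by simp_all
  define K where "K = ortho_center_coeff + ecc/2"
  have K: "(1 - ecc\<^sup>2) * K = ecc * (2 - ecc*q) * (1 + ecc\<^sup>2 - ecc*q) + (1 - ecc\<^sup>2) * ecc/2"
    unfolding eqD K_def ortho_center_coeff_def D_def[symmetric] using \<open>1 - ecc\<^sup>2 \<noteq> 0\<close>
    by (simp add: field_simps)
  have R: "(1 - ecc\<^sup>2) * ortho_radius_coeff = ecc\<^sup>2 * (2 - ecc*q)"
    unfolding eqD ortho_radius_coeff_def D_def[symmetric] using \<open>1 - ecc\<^sup>2 \<noteq> 0\<close>
    by (simp add: field_simps)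
  note perp = orthocenter_perp_unit_circle[OF _ _ _ _ _ \<open>q\<^sup>2 \<noteq> 1\<close> \<open>ecc \<noteq> 0\<close> \<open>1 - ecc\<^sup>2 \<noteq> 0\<close> Q K R]
  define g :: "complex \<Rightarrow> complex" where "g z = z - of_real (ecc/2) * z\<^sup>2 - of_real (ecc/2)" for z
  define W where "W = of_real ortho_center_coeff + of_real ortho_radius_coeff * (z1*z2*z3)"
  have inv: "invert (- c, 0) \<rho> P1 = (- c, 0) + (\<rho>\<^sup>2 / lat) *\<^sub>R pt_of_complex (g z1)"
    "invert (- c, 0) \<rho> P2 = (- c, 0) + (\<rho>\<^sup>2 / lat) *\<^sub>R pt_of_complex (g z2)"
    "invert (- c, 0) \<rho> P3 = (- c, 0) + (\<rho>\<^sup>2 / lat) *\<^sub>R pt_of_complex (g z3)"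
    unfolding g_def using invert_focal_polar z1 z2 z3 by simp_all
  have "P1 \<noteq> P2" "P2 \<noteq> P3" "P3 \<noteq> P1" using tp unfolding three_periodic_def by auto
  then have "invert (- c, 0) \<rho> P1 \<noteq> invert (- c, 0) \<rho> P2"
    "invert (- c, 0) \<rho> P2 \<noteq> invert (- c, 0) \<rho> P3" "invert (- c, 0) \<rho> P3 \<noteq> invert (- c, 0) \<rho> P1"
    using invert_inj[OF focal_polar_ne_focus focal_polar_ne_focus \<open>0 < \<rho>\<close>] z1 z2 z3 by metis+
  moreover have "Re ((W - g z1) * cnj (g z2 - g z3)) = 0" "Re ((W - g z2) * cnj (g z3 - g z1)) = 0"
    using perp[OF u sum sum2] perp[OF u(2,3,1)] sum sum2
    unfolding W_def g_def K_def by (simp_all add: algebra_simps)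
  ultimately show ?thesis
    using orthocenter_similar_image[of "(- c, 0)" "\<rho>\<^sup>2 / lat"] H unfolding inv W_def by blast
qed

lemma inverse_orthocenter_circle:
  assumes "0 < \<rho>" "three_periodic a b P1 P2 P3"
    and "is_orthocenter (invert (- c, 0) \<rho> P1) (invert (- c, 0) \<rho> P2) (invert (- c, 0) \<rho> P3) H"
  shows "dist H (c * (-1 + \<rho>\<^sup>2 * ((b\<^sup>2 + \<delta>) * \<delta>) / (a\<^sup>2 * b^4)), 0)
    = \<rho>\<^sup>2 * (c\<^sup>2 * (b\<^sup>2 + \<delta>)) / (a * b^4)"
proof -
  have "on_ellipse a b P1" "on_ellipse a b P2" "on_ellipse a b P3"
    using assms(2) unfolding three_periodic_def by auto
  then obtain z1 z2 z3 where z: "focal_polar P1 z1" "focal_polar P2 z2" "focal_polar P3 z3"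
    using on_ellipse_focal_polar by metis
  define s where "s = z1 * z2 * z3"
  have "cmod s = 1" using z unfolding s_def focal_polar_def by (simp add: norm_mult)
  have ecc_delta: "1 - ecc\<^sup>2 + \<delta>/a\<^sup>2 = (b\<^sup>2 + \<delta>) / a\<^sup>2"
    using one_minus_ecc_sq a_pos by (simp add: field_simps)
  have center: "(\<rho>\<^sup>2 / lat) * ortho_center_coeff = c * (\<rho>\<^sup>2 * ((b\<^sup>2 + \<delta>) * \<delta>) / (a\<^sup>2 * b^4))"
    unfolding ortho_center_coeff_def ecc_delta one_minus_ecc_sq unfolding lat_def ecc_def
    using a_pos b_pos by (simp add: field_simps power2_eq_square power4_eq_xxxx)
  have radius: "(\<rho>\<^sup>2 / lat) * ortho_radius_coeff = \<rho>\<^sup>2 * (c\<^sup>2 * (b\<^sup>2 + \<delta>)) / (a * b^4)"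
    unfolding ortho_radius_coeff_def ecc_delta one_minus_ecc_sq unfolding lat_def ecc_def
    using a_pos b_pos by (simp add: field_simps power2_eq_square power4_eq_xxxx)
  have "c * (-1 + \<rho>\<^sup>2 * ((b\<^sup>2 + \<delta>) * \<delta>) / (a\<^sup>2 * b^4)) = - c + (\<rho>\<^sup>2 / lat) * ortho_center_coeff"
    unfolding center by (simp add: algebra_simps)
  then have "H - (c * (-1 + \<rho>\<^sup>2 * ((b\<^sup>2 + \<delta>) * \<delta>) / (a\<^sup>2 * b^4)), 0)
      = ((\<rho>\<^sup>2 / lat) * ortho_radius_coeff) *\<^sub>R pt_of_complex s"
    unfolding inverse_orthocenter_eq[OF assms(1,2) z assms(3)] s_def
    by (simp add: pt_of_complex_def algebra_simps)
  moreover have "0 \<le> (\<rho>\<^sup>2 / lat) * ortho_radius_coeff"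
    unfolding radius using a_pos b_pos delta_nonneg by simp
  ultimately show ?thesis
    unfolding dist_norm radius[symmetric]
    by (simp only: norm_scaleR norm_pt_of_complex \<open>cmod s = 1\<close> abs_of_nonneg mult_1_right)
qed

end

theorem mainTheorem13:
  fixes a b \<rho> :: real and P1 P2 P3 H :: pt
  assumes "a > b" "b > 0" "\<rho> > 0"
    and "three_periodic a b P1 P2 P3"
    and "is_orthocenter
           (invert (- sqrt (a\<^sup>2 - b\<^sup>2), 0) \<rho> P1)
           (invert (- sqrt (a\<^sup>2 - b\<^sup>2), 0) \<rho> P2)
           (invert (- sqrt (a\<^sup>2 - b\<^sup>2), 0) \<rho> P3) H"
  shows "let c = sqrt (a\<^sup>2 - b\<^sup>2); \<delta> = sqrt (a^4 - a\<^sup>2 * b\<^sup>2 + b^4) in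
         dist H (c * (-1 + \<rho>\<^sup>2 * ((b\<^sup>2 + \<delta>) * \<delta>) / (a\<^sup>2 * b^4)), 0)
           = \<rho>\<^sup>2 * (c\<^sup>2 * (b\<^sup>2 + \<delta>)) / (a * b^4)"
proof -
  interpret ellipse a b using assms(1,2) by unfold_locales
  show ?thesis
    using inverse_orthocenter_circle[OF assms(3,4) assms(5)[folded c_def]]
    unfolding Let_def c_def \<delta>_def .
qed

end
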